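(* Let $\mathcal{U}$ be a finite set of candidate utility functions whose cardinality is $O(1)$, i.e., independent of the dataset size $N=|\mathcal{D}|$, and satisfying the bounded-range assumption. Then $\mathcal{U}$ is $(\epsilon,\delta)$-gameable under the aggregate-value favorability $F_{\mathrm{agg}}(\psi(U);P)$, for any $P\subseteq\mathcal{D}$. A witnessing algorithm is: for each $U\in\mathcal{U}$, estimate all semivalues $\psi_i(U,w)$ by stratified sampling (drawing, for each $i$ and each $k$, independent uniform coalitions of size $k$ not containing $i$ and averaging marginal contributions, weighted by $w_k\binom{N-1}{k}$), compute the estimated $F_{\mathrm{agg}}$ for $P$, and return the $U\in\mathcal{U}$ with the largest estimated favorability.
   Context: Let $\mathcal{D}$ be a dataset of $N$ datapoints. A utility function is a map $U:2^{\mathcal{D}}\to\mathbb{R}$. Fix non-negative weights $w_0,\dots,w_{N-1}$ with $\sum_{S\subseteq\mathcal{D}\setminus\{i\}}w_{|S|}=1$; the semivalue of $i\in\mathcal{D}$ is $\psi_i(U)=\sum_{S\subseteq\mathcal{D}\setminus\{i\}} w_{|S|}[U(S\cup\{i\})-U(S)]$. The aggregate-value favorability of $U$ for $P\subseteq\mathcal{D}$ is $F_{\mathrm{agg}}(\psi(U);P)=\sum_{i\in P}\psi_i(U)$. Bounded-range assumption (standing): there is a finite $r$ such that $\max_{S\subseteq\mathcal{D}}U(S)-\min_{S\subseteq\mathcal{D}}U(S)\le r$ for all $U\in\mathcal{U}$. A candidate class $\mathcal{U}$ is $(\epsilon,\delta)$-gameable under favorability $F$ and semivalue $\psi$ if there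 exists an algorithm that, for any $P\subseteq\mathcal{D}$, returns $U\in\mathcal{U}$ such that with probability at least $1-\delta$, $|F(\psi(U),P)-\max_{U'\in\mathcal{U}}F(\psi(U'),P)|<\epsilon$, using at most $O(\mathrm{poly}(N)\log(1/\delta)/\epsilon^2)$ utility function evaluations. *)

theory Defs
  imports "HOL-Probability.Probability"
begin

definition semivalue :: "'a set \<Rightarrow> (nat \<Rightarrow> real) \<Rightarrow> ('a set \<Rightarrow> real) \<Rightarrow> 'a \<Rightarrow> real" where
  "semivalue D w U i = (\<Sum>S\<in>Pow (D - {i}). w (card S) * (U (S \<union> {i}) - U S))"

definition F_agg :: "'a set \<Rightarrow> (nat \<Rightarrow> real) \<Rightarrow> ('a set \<Rightarrow> real) \<Rightarrow> 'a set \<Rightarrow> real" where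
  "F_agg D w U P = (\<Sum>i\<in>P. semivalue D w U i)"

definition valid_weights :: "'a set \<Rightarrow> (nat \<Rightarrow> real) \<Rightarrow> bool" where
  "valid_weights D w \<longleftrightarrow> (\<forall>k. 0 \<le> w k) \<and>
     (\<forall>i\<in>D. (\<Sum>S\<in>Pow (D - {i}). w (card S)) = 1)"

definition bounded_range :: "'a set \<Rightarrow> real \<Rightarrow> ('a set \<Rightarrow> real) set \<Rightarrow> bool" where
  "bounded_range D r UU \<longleftrightarrow>
     (\<forall>U\<in>UU. \<forall>S T. S \<subseteq> D \<longrightarrow> T \<subseteq> D \<longrightarrow> U S - U T \<le> r)"

(* Index set of all samples: (U, i, k, j) = j-th sampled coalition of size k avoiding i,
   used for estimating the semivalue of i under U. *)
definition sample_index :: "'a set \<Rightarrow> ('a set \<Rightarrow> real) set \<Rightarrow> nat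
     \<Rightarrow> (('a set \<Rightarrow> real) \<times> 'a \<times> nat \<times> nat) set" where
  "sample_index D UU m = UU \<times> D \<times> {..<card D} \<times> {..<m}"

definition strat_sample_pmf :: "'a set \<Rightarrow> ('a set \<Rightarrow> real) set \<Rightarrow> nat
     \<Rightarrow> (('a set \<Rightarrow> real) \<times> 'a \<times> nat \<times> nat \<Rightarrow> 'a set) pmf" where
  "strat_sample_pmf D UU m =
     Pi_pmf (sample_index D UU m) {}
       (\<lambda>(U, i, k, j). pmf_of_set {S. S \<subseteq> D - {i} \<and> card S = k})"

definition est_semivalue :: "'a set \<Rightarrow> (nat \<Rightarrow> real) \<Rightarrow> nat
     \<Rightarrow> (('a set \<Rightarrow> real) \<times> 'a \<times> nat \<times> nat \<Rightarrow> 'a set)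
     \<Rightarrow> ('a set \<Rightarrow> real) \<Rightarrow> 'a \<Rightarrow> real" where
  "est_semivalue D w m \<sigma> U i =
     (\<Sum>k<card D. w k * real (card D - 1 choose k) *
        ((\<Sum>j<m. U (\<sigma> (U, i, k, j) \<union> {i}) - U (\<sigma> (U, i, k, j))) / real m))"

definition est_F_agg :: "'a set \<Rightarrow> (nat \<Rightarrow> real) \<Rightarrow> nat
     \<Rightarrow> (('a set \<Rightarrow> real) \<times> 'a \<times> nat \<times> nat \<Rightarrow> 'a set)
     \<Rightarrow> ('a set \<Rightarrow> real) \<Rightarrow> 'a set \<Rightarrow> real" where
  "est_F_agg D w m \<sigma> U P = (\<Sum>i\<in>P. est_semivalue D w m \<sigma> U i)"

definition num_evals :: "'a set \<Rightarrow> ('a set \<Rightarrow> real) set \<Rightarrow> nat \<Rightarrow> nat" where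
  "num_evals D UU m = 2 * card (sample_index D UU m)"

end

theory Submission
  imports Defs
begin

(* For a fixed utility U, the estimate of F_agg(U;P) is the mean of m independent rounds, the
   j-th round using the j-th sample of every stratum. Each round is unbiased: a uniform coalition
   of size k avoiding i has expected marginal contribution equal to the stratum average, and the
   factor w_k * binom(N-1,k) turns that average back into the semivalue weighting. Each round is
   bounded by N r, since these factors sum to 1. Hoeffding's inequality and a union bound over the
   at most K candidates make every estimate (epsilon/2)-accurate with probability 1 - delta once
   m is of order N^2 log(K/delta) / epsilon^2, and a maximiser of uniformly (epsilon/2)-accurate
   estimates is epsilon-optimal. *)

lemma sum_Pow_by_card:
  fixes w :: "nat \<Rightarrow> real"
  assumes "finite A" "card A < n"
  shows "(\<Sum>S\<in>Pow A. w (card S) * g S) = (\<Sum>k<n. w k * (\<Sum>S | S \<subseteq> A \<and> card S = k. g S))"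
proof -
  have "card ` Pow A \<subseteq> {..<n}"
    using assms by (auto dest: card_mono[OF \<open>finite A\<close>])
  then have "(\<Sum>S\<in>Pow A. w (card S) * g S) = (\<Sum>k<n. \<Sum>S | S \<in> Pow A \<and> card S = k. w (card S) * g S)"
    using assms by (intro sum.group[symmetric]) auto
  then show ?thesis
    by (simp add: sum_distrib_left)
qed

lemma argmax_of_approximation_near_Max:
  fixes f g :: "'b \<Rightarrow> real"
  assumes "finite A" "U \<in> A"
    and close: "\<And>V. V \<in> A \<Longrightarrow> \<bar>g V - f V\<bar> < \<epsilon> / 2"
    and argmax: "\<And>V. V \<in> A \<Longrightarrow> g V \<le> g U"
  shows "\<bar>f U - Max (f ` A)\<bar> < \<epsilon>"
proof -
  have "Max (f ` A) \<in> f ` A"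
    using assms(1,2) by (intro Max_in) auto
  then obtain V where V: "V \<in> A" "Max (f ` A) = f V"
    by auto
  have "f U \<le> f V"
    using Max_ge[of "f ` A" "f U"] assms(1,2) V(2) by auto
  moreover have "f V - \<epsilon> < f U"
    using close[OF V(1)] close[OF \<open>U \<in> A\<close>] argmax[OF V(1)] by linarith
  ultimately show ?thesis
    using V(2) by linarith
qed

lemma (in prob_space) Hoeffding_mean_abs_ge:
  fixes X :: "'b \<Rightarrow> 'a \<Rightarrow> real" and B \<mu> t :: real
  assumes "finite I" "I \<noteq> {}" "indep_vars (\<lambda>_. borel) X I"
    and "\<And>i. i \<in> I \<Longrightarrow> AE x in M. X i x \<in> {-B..B}"
    and mean: "\<And>i. i \<in> I \<Longrightarrow> expectation (X i) = \<mu>"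
    and "0 \<le> t" "0 < B"
  shows "prob {x \<in> space M. t \<le> \<bar>(\<Sum>i\<in>I. X i x) / card I - \<mu>\<bar>}
           \<le> 2 * exp (- (card I * t\<^sup>2 / (2 * B\<^sup>2)))"
proof -
  interpret Hoeffding_ineq M I X "\<lambda>_. - B" "\<lambda>_. B" "\<Sum>i\<in>I. expectation (X i)"
    using assms by unfold_locales auto
  define n where "n = real (card I)"
  have n: "n > 0"
    using assms(1,2) by (simp add: n_def card_gt_0_iff)
  have "{x \<in> space M. t \<le> \<bar>(\<Sum>i\<in>I. X i x) / n - \<mu>\<bar>}
      = {x \<in> space M. n * t \<le> \<bar>(\<Sum>i\<in>I. X i x) - (\<Sum>i\<in>I. expectation (X i))\<bar>}"
  proof -
    have "\<bar>s - n * \<mu>\<bar> = n * \<bar>s / n - \<mu>\<bar>" for s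
      using n by (simp add: field_simps flip: abs_mult)
    then show ?thesis
      using n mean by (simp add: n_def mult.commute)
  qed
  also have "prob \<dots> \<le> 2 * exp (- 2 * (n * t)\<^sup>2 / (\<Sum>i\<in>I. (B - - B)\<^sup>2))"
    using n assms by (intro Hoeffding_ineq_abs_ge) (auto simp: card_gt_0_iff)
  also have "- 2 * (n * t)\<^sup>2 / (\<Sum>i\<in>I. (B - - B)\<^sup>2) = - (n * t\<^sup>2 / (2 * B\<^sup>2))"
    using n assms by (simp add: n_def power2_eq_square field_simps)
  finally show ?thesis
    by (simp add: n_def)
qed

lemma exp_le_of_sample_size:
  fixes B \<delta> \<epsilon> c s :: real
  assumes "0 < \<delta>" "\<delta> \<le> 1" "1 \<le> c" "0 < \<epsilon>" "0 < B"
    and s: "8 * B\<^sup>2 * (1 + ln c) * (1 + ln (1 / \<delta>)) / \<epsilon>\<^sup>2 \<le> s"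
  shows "exp (- (s * (\<epsilon> / 2)\<^sup>2 / (2 * B\<^sup>2))) \<le> \<delta> / c"
proof -
  have "ln c + ln (1 / \<delta>) \<le> (1 + ln c) * (1 + ln (1 / \<delta>))"
    using assms by (simp add: algebra_simps)
  also have "\<dots> \<le> s * (\<epsilon> / 2)\<^sup>2 / (2 * B\<^sup>2)"
    using s assms by (simp add: field_simps power2_eq_square)
  finally have "exp (- (s * (\<epsilon> / 2)\<^sup>2 / (2 * B\<^sup>2))) \<le> exp (- (ln c + ln (1 / \<delta>)))"
    by simp
  also have "\<dots> = exp (- ln (c / \<delta>))"
    using assms by (simp add: ln_div)
  also have "\<dots> = \<delta> / c"
    using assms by (simp add: exp_minus)
  finally show ?thesis .
qed

abbreviation stratum :: "'a set \<Rightarrow> 'a \<Rightarrow> nat \<Rightarrow> 'a set set" where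
  "stratum D i k \<equiv> {S. S \<subseteq> D - {i} \<and> card S = k}"

lemma card_stratum:
  assumes "finite D" "i \<in> D"
  shows "card (stratum D i k) = card D - 1 choose k"
  using assms n_subsets[of "D - {i}" k] by simp

lemma finite_stratum:
  assumes "finite D"
  shows "finite (stratum D i k)"
  by (rule finite_subset[of _ "Pow D"]) (use assms in auto)

lemma stratum_nonempty:
  assumes "finite D" "i \<in> D" "k < card D"
  shows "stratum D i k \<noteq> {}"
proof -
  have "card (stratum D i k) \<noteq> 0"
    using assms by (simp add: card_stratum)
  then show ?thesis
    by force
qed

lemma set_pmf_of_stratum:
  assumes "finite D" "i \<in> D" "k < card D"
  shows "set_pmf (pmf_of_set (stratum D i k)) = stratum D i k"
proof (rule set_pmf_of_set)
  show "stratum D i k \<noteq> {}"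
    using assms by (rule stratum_nonempty)
  show "finite (stratum D i k)"
    using assms(1) by (rule finite_stratum)
qed

lemma valid_weights_sum_binomial:
  assumes "finite D" "valid_weights D w" "i \<in> D"
  shows "(\<Sum>k<card D. w k * real (card D - 1 choose k)) = 1"
proof -
  have "card (D - {i}) < card D"
    using assms(1,3) by (rule card_Diff1_less)
  have "(\<Sum>k<card D. w k * real (card D - 1 choose k)) = (\<Sum>k<card D. w k * (\<Sum>S\<in>stratum D i k. 1))"
    using assms by (simp add: card_stratum)
  also have "\<dots> = (\<Sum>S\<in>Pow (D - {i}). w (card S) * 1)"
    using assms \<open>card (D - {i}) < card D\<close> by (intro sum_Pow_by_card[symmetric]) auto
  also have "\<dots> = 1"
    using assms by (simp add: valid_weights_def)
  finally show ?thesis .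
qed

definition marginal :: "('a set \<Rightarrow> real) \<Rightarrow> 'a \<Rightarrow> 'a set \<Rightarrow> real" where
  "marginal U i S = U (S \<union> {i}) - U S"

lemma abs_marginal_le:
  assumes "bounded_range D r UU" "U \<in> UU" "S \<subseteq> D" "i \<in> D"
  shows "\<bar>marginal U i S\<bar> \<le> r"
proof -
  have "S \<union> {i} \<subseteq> D"
    using assms by auto
  then have "U (S \<union> {i}) - U S \<le> r" "U S - U (S \<union> {i}) \<le> r"
    using assms unfolding bounded_range_def by blast+
  then show ?thesis
    unfolding marginal_def by linarith
qed

lemma set_pmf_strat_sample_eq:
  assumes "finite D" "finite UU"
  shows "set_pmf (strat_sample_pmf D UU m)
       = PiE_dflt (sample_index D UU m) {} (\<lambda>(U, i, k, j). stratum D i k)"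
proof -
  have fin: "finite (sample_index D UU m)"
    using assms by (simp add: sample_index_def)
  show ?thesis
    unfolding strat_sample_pmf_def set_Pi_pmf[OF fin] PiE_dflt_def using assms
    by (intro Collect_cong all_cong1) (auto simp: sample_index_def set_pmf_of_stratum)
qed

lemma finite_set_pmf_strat_sample:
  assumes "finite D" "finite UU"
  shows "finite (set_pmf (strat_sample_pmf D UU m))"
  unfolding set_pmf_strat_sample_eq[OF assms] using assms
  by (intro finite_PiE_dflt) (auto simp: sample_index_def finite_stratum)

lemma strat_sample_in_stratum:
  assumes "finite D" "finite UU" "\<sigma> \<in> set_pmf (strat_sample_pmf D UU m)"
    and "(U, i, k, j) \<in> sample_index D UU m"
  shows "\<sigma> (U, i, k, j) \<in> stratum D i k"
  using assms(3,4) unfolding set_pmf_strat_sample_eq[OF assms(1,2)] PiE_dflt_def by fastforce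

lemma strat_sample_component:
  assumes "finite D" "finite UU" "(U, i, k, j) \<in> sample_index D UU m"
  shows "map_pmf (\<lambda>\<sigma>. \<sigma> (U, i, k, j)) (strat_sample_pmf D UU m) = pmf_of_set (stratum D i k)"
proof -
  have "finite (sample_index D UU m)"
    using assms by (simp add: sample_index_def)
  with assms show ?thesis
    unfolding strat_sample_pmf_def by (simp add: Pi_pmf_component)
qed

definition round_estimate :: "'a set \<Rightarrow> (nat \<Rightarrow> real) \<Rightarrow> ('a set \<Rightarrow> real) \<Rightarrow> 'a set \<Rightarrow> nat
     \<Rightarrow> (('a set \<Rightarrow> real) \<times> 'a \<times> nat \<times> nat \<Rightarrow> 'a set) \<Rightarrow> real" where
  "round_estimate D w U P j \<sigma> =
     (\<Sum>i\<in>P. \<Sum>k<card D. w k * real (card D - 1 choose k) * marginal U i (\<sigma> (U, i, k, j)))"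

lemma est_F_agg_eq_mean_rounds:
  "est_F_agg D w m \<sigma> U P = (\<Sum>j<m. round_estimate D w U P j \<sigma>) / real m"
proof -
  have "(\<Sum>j<m. round_estimate D w U P j \<sigma>)
      = (\<Sum>i\<in>P. \<Sum>k<card D. w k * real (card D - 1 choose k) * (\<Sum>j<m. marginal U i (\<sigma> (U, i, k, j))))"
    unfolding round_estimate_def sum_distrib_left
    by (subst sum.swap, rule sum.cong[OF refl], rule sum.swap)
  then show ?thesis
    unfolding est_F_agg_def est_semivalue_def marginal_def
    by (simp only: times_divide_eq_right sum_divide_distrib[symmetric])
qed

lemma expectation_round_estimate:
  assumes "finite D" "finite UU" "U \<in> UU" "P \<subseteq> D" "j < m"
  shows "measure_pmf.expectation (strat_sample_pmf D UU m) (round_estimate D w U P j) = F_agg D w U P"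
proof -
  let ?p = "strat_sample_pmf D UU m"
  have integrable: "integrable (measure_pmf ?p) f" for f :: "_ \<Rightarrow> real"
    by (rule integrable_measure_pmf_finite[OF finite_set_pmf_strat_sample[OF assms(1,2)]])
  have component: "real (card D - 1 choose k) * measure_pmf.expectation ?p (\<lambda>\<sigma>. marginal U i (\<sigma> (U, i, k, j)))
      = (\<Sum>S\<in>stratum D i k. marginal U i S)" if "i \<in> D" "k < card D" for i k
  proof -
    have "measure_pmf.expectation ?p (\<lambda>\<sigma>. marginal U i (\<sigma> (U, i, k, j)))
        = measure_pmf.expectation (map_pmf (\<lambda>\<sigma>. \<sigma> (U, i, k, j)) ?p) (marginal U i)"
      by simp
    also have "\<dots> = measure_pmf.expectation (pmf_of_set (stratum D i k)) (marginal U i)"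
      using assms that by (simp add: strat_sample_component sample_index_def)
    also have "\<dots> = (\<Sum>S\<in>stratum D i k. marginal U i S) / real (card (stratum D i k))"
      using stratum_nonempty[OF assms(1) that] finite_stratum[OF assms(1)] by (rule integral_pmf_of_set)
    finally show ?thesis
      using that assms(1) by (simp add: card_stratum)
  qed
  have "measure_pmf.expectation ?p (round_estimate D w U P j)
      = (\<Sum>i\<in>P. \<Sum>k<card D. w k * (real (card D - 1 choose k) *
           measure_pmf.expectation ?p (\<lambda>\<sigma>. marginal U i (\<sigma> (U, i, k, j)))))"
    unfolding round_estimate_def by (simp add: integrable mult.assoc)
  also have "\<dots> = (\<Sum>i\<in>P. \<Sum>k<card D. w k * (\<Sum>S\<in>stratum D i k. marginal U i S))"
  proof (intro sum.cong refl)
    fix i k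
    assume "i \<in> P" "k \<in> {..<card D}"
    then show "w k * (real (card D - 1 choose k) * measure_pmf.expectation ?p (\<lambda>\<sigma>. marginal U i (\<sigma> (U, i, k, j))))
        = w k * (\<Sum>S\<in>stratum D i k. marginal U i S)"
      using component[of i k] assms(4) by auto
  qed
  also have "\<dots> = F_agg D w U P"
    unfolding F_agg_def semivalue_def
  proof (intro sum.cong refl)
    fix i
    assume "i \<in> P"
    then have "card (D - {i}) < card D"
      using assms(1,4) by (intro card_Diff1_less) auto
    then show "(\<Sum>k<card D. w k * (\<Sum>S\<in>stratum D i k. marginal U i S))
        = (\<Sum>S\<in>Pow (D - {i}). w (card S) * (U (S \<union> {i}) - U S))"
      unfolding marginal_def using assms(1) by (intro sum_Pow_by_card[symmetric]) auto
  qed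
  finally show ?thesis .
qed

lemma abs_round_estimate_le:
  assumes "finite D" "finite UU" "U \<in> UU" "P \<subseteq> D" "j < m" "0 \<le> r"
    and "valid_weights D w" "bounded_range D r UU"
    and "\<sigma> \<in> set_pmf (strat_sample_pmf D UU m)"
  shows "\<bar>round_estimate D w U P j \<sigma>\<bar> \<le> real (card D) * r"
proof -
  have term_le: "\<bar>w k * real (card D - 1 choose k) * marginal U i (\<sigma> (U, i, k, j))\<bar>
      \<le> w k * real (card D - 1 choose k) * r" if "i \<in> D" "k < card D" for i k
  proof -
    have "\<sigma> (U, i, k, j) \<subseteq> D"
      using strat_sample_in_stratum[OF assms(1,2,9), of U i k j] assms(3,5) that
      by (auto simp: sample_index_def)
    then have "\<bar>marginal U i (\<sigma> (U, i, k, j))\<bar> \<le> r"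
      using assms(3,8) that(1) by (intro abs_marginal_le)
    moreover have "0 \<le> w k * real (card D - 1 choose k)"
      using assms(7) by (simp add: valid_weights_def)
    ultimately show ?thesis
      unfolding abs_mult[of "w k * real (card D - 1 choose k)"] by (metis abs_of_nonneg mult_left_mono)
  qed
  have player_le: "\<bar>\<Sum>k<card D. w k * real (card D - 1 choose k) * marginal U i (\<sigma> (U, i, k, j))\<bar> \<le> r"
    if "i \<in> D" for i
  proof -
    have "\<bar>\<Sum>k<card D. w k * real (card D - 1 choose k) * marginal U i (\<sigma> (U, i, k, j))\<bar>
        \<le> (\<Sum>k<card D. w k * real (card D - 1 choose k) * r)"
      by (rule order_trans[OF sum_abs sum_mono]) (use term_le[OF that] in auto)
    also have "\<dots> = r"
      using valid_weights_sum_binomial[OF assms(1,7) that] by (simp flip: sum_distrib_right)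
    finally show ?thesis .
  qed
  have "\<bar>round_estimate D w U P j \<sigma>\<bar> \<le> (\<Sum>i\<in>P. r)"
    unfolding round_estimate_def
    by (rule order_trans[OF sum_abs sum_mono]) (use player_le assms(4) in auto)
  also have "\<dots> \<le> real (card D) * r"
    using assms(1,4,6) card_mono[OF assms(1,4)] by (simp add: mult_right_mono)
  finally show ?thesis .
qed

lemma indep_round_estimates:
  assumes "finite D" "finite UU" "U \<in> UU" "P \<subseteq> D"
  shows "prob_space.indep_vars (measure_pmf (strat_sample_pmf D UU m)) (\<lambda>_. borel)
           (\<lambda>j. round_estimate D w U P j) {..<m}"
proof -
  let ?M = "measure_pmf (strat_sample_pmf D UU m)"
  define block where "block j = {U} \<times> D \<times> {..<card D} \<times> {j}" for j :: nat
  define h where "h j \<sigma> = (\<Sum>i\<in>P. \<Sum>k<card D. w k * real (card D - 1 choose k) * marginal U i (\<sigma> (U, i, k, j)))"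
    for j and \<sigma> :: "('a set \<Rightarrow> real) \<times> 'a \<times> nat \<times> nat \<Rightarrow> 'a set"
  have "finite (sample_index D UU m)"
    using assms by (simp add: sample_index_def)
  then have "prob_space.indep_vars ?M (\<lambda>_. count_space UNIV) (\<lambda>x \<sigma>. \<sigma> x) (sample_index D UU m)"
    unfolding strat_sample_pmf_def by (rule indep_vars_Pi_pmf)
  then have "prob_space.indep_vars ?M (\<lambda>j. PiM (block j) (\<lambda>_. count_space UNIV))
      (\<lambda>j \<sigma>. restrict \<sigma> (block j)) {..<m}"
    using assms
    by (intro prob_space.indep_vars_restrict[OF measure_pmf.prob_space_axioms])
      (auto simp: block_def sample_index_def disjoint_family_on_def)
  moreover have "h j \<in> borel_measurable (PiM (block j) (\<lambda>_. count_space UNIV))" for j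
    unfolding h_def
  proof (intro borel_measurable_sum borel_measurable_times borel_measurable_const)
    fix i k
    assume "i \<in> P" "k \<in> {..<card D}"
    then have "(U, i, k, j) \<in> block j"
      using assms by (auto simp: block_def)
    then show "(\<lambda>\<sigma>. marginal U i (\<sigma> (U, i, k, j))) \<in> borel_measurable (PiM (block j) (\<lambda>_. count_space UNIV))"
      by (rule measurable_compose[OF measurable_component_singleton]) simp
  qed
  ultimately have "prob_space.indep_vars ?M (\<lambda>_. borel) (\<lambda>j \<sigma>. h j (restrict \<sigma> (block j))) {..<m}"
    by (rule prob_space.indep_vars_compose2[OF measure_pmf.prob_space_axioms])
  moreover have "h j (restrict \<sigma> (block j)) = round_estimate D w U P j \<sigma>" for j \<sigma>
    unfolding h_def round_estimate_def using assms by (intro sum.cong refl) (auto simp: block_def)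
  ultimately show ?thesis
    by simp
qed

lemma prob_est_F_agg_deviation_le:
  assumes "finite D" "finite UU" "U \<in> UU" "P \<subseteq> D" "0 \<le> r" "m > 0" "0 \<le> t"
    and "valid_weights D w" "bounded_range D r UU"
  defines "B \<equiv> (r + 1) * (real (card D) + 1)" \<comment> \<open>bounds N r and, unlike N r, is positive even for r = 0\<close>
  shows "measure_pmf.prob (strat_sample_pmf D UU m) {\<sigma>. t \<le> \<bar>est_F_agg D w m \<sigma> U P - F_agg D w U P\<bar>}
           \<le> 2 * exp (- (real m * t\<^sup>2 / (2 * B\<^sup>2)))"
proof -
  let ?p = "strat_sample_pmf D UU m"
  have "0 < B"
    using assms(5) by (simp add: B_def)
  have "AE \<sigma> in measure_pmf ?p. round_estimate D w U P j \<sigma> \<in> {-B..B}" if "j < m" for j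
  proof (rule AE_pmfI)
    fix \<sigma>
    assume "\<sigma> \<in> set_pmf ?p"
    then have "\<bar>round_estimate D w U P j \<sigma>\<bar> \<le> real (card D) * r"
      using assms that by (intro abs_round_estimate_le) auto
    also have "\<dots> \<le> B"
      using assms(5) by (simp add: B_def algebra_simps)
    finally show "round_estimate D w U P j \<sigma> \<in> {-B..B}"
      by (simp add: abs_le_iff)
  qed
  then have "measure_pmf.prob ?p {\<sigma> \<in> space (measure_pmf ?p).
        t \<le> \<bar>(\<Sum>j<m. round_estimate D w U P j \<sigma>) / real (card {..<m}) - F_agg D w U P\<bar>}
      \<le> 2 * exp (- (real (card {..<m}) * t\<^sup>2 / (2 * B\<^sup>2)))"
    using assms(1-4,6,7) \<open>0 < B\<close> expectation_round_estimate[OF assms(1-4)]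
    by (intro measure_pmf.Hoeffding_mean_abs_ge[OF _ _ indep_round_estimates]) auto
  then show ?thesis
    by (simp add: est_F_agg_eq_mean_rounds)
qed

lemma prob_all_estimates_accurate:
  assumes "finite D" "finite UU" "card UU \<le> K" "P \<subseteq> D" "0 \<le> r"
    and "valid_weights D w" "bounded_range D r UU"
    and "0 < \<epsilon>" "0 < \<delta>" "\<delta> \<le> 1"
    and m: "8 * ((r + 1) * (real (card D) + 1))\<^sup>2 * (1 + ln (2 * real K + 2)) * (1 + ln (1 / \<delta>)) / \<epsilon>\<^sup>2
              \<le> real m"
  shows "1 - \<delta> \<le> measure_pmf.prob (strat_sample_pmf D UU m)
           {\<sigma>. \<forall>U\<in>UU. \<bar>est_F_agg D w m \<sigma> U P - F_agg D w U P\<bar> < \<epsilon> / 2}"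
proof -
  let ?p = "strat_sample_pmf D UU m"
  define B where "B = (r + 1) * (real (card D) + 1)"
  define bad where "bad U = {\<sigma>. \<epsilon> / 2 \<le> \<bar>est_F_agg D w m \<sigma> U P - F_agg D w U P\<bar>}" for U
  have "0 < B"
    using assms(5) by (simp add: B_def)
  have "0 < 8 * B\<^sup>2 * (1 + ln (2 * real K + 2)) * (1 + ln (1 / \<delta>)) / \<epsilon>\<^sup>2"
    using \<open>0 < B\<close> assms(8-10) by (simp add: add_pos_nonneg)
  then have "0 < m"
    using m by (simp add: B_def)
  have "measure_pmf.prob ?p (bad U) \<le> \<delta> / (real K + 1)" if "U \<in> UU" for U
  proof -
    have "measure_pmf.prob ?p (bad U) \<le> 2 * exp (- (real m * (\<epsilon> / 2)\<^sup>2 / (2 * B\<^sup>2)))"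
      unfolding bad_def B_def using assms that \<open>0 < m\<close> by (intro prob_est_F_agg_deviation_le) auto
    also have "\<dots> \<le> 2 * (\<delta> / (2 * real K + 2))"
      using assms \<open>0 < B\<close> by (intro mult_left_mono exp_le_of_sample_size) (auto simp: B_def)
    finally show ?thesis
      by (simp add: field_simps)
  qed
  then have "measure_pmf.prob ?p (\<Union>U\<in>UU. bad U) \<le> real (card UU) * (\<delta> / (real K + 1))"
    using measure_pmf.finite_measure_subadditive_finite[OF assms(2), of bad ?p]
      sum_bounded_above[of UU "\<lambda>U. measure_pmf.prob ?p (bad U)"] by force
  also have "\<dots> \<le> (real K + 1) * (\<delta> / (real K + 1))"
    using assms(3,9) by (intro mult_right_mono) auto
  also have "\<dots> = \<delta>"
    by simp
  finally have "1 - \<delta> \<le> 1 - measure_pmf.prob ?p (\<Union>U\<in>UU. bad U)"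
    by simp
  also have "\<dots> = measure_pmf.prob ?p (UNIV - (\<Union>U\<in>UU. bad U))"
    using measure_pmf.prob_compl[of "\<Union>U\<in>UU. bad U" ?p] by simp
  also have "UNIV - (\<Union>U\<in>UU. bad U) = {\<sigma>. \<forall>U\<in>UU. \<bar>est_F_agg D w m \<sigma> U P - F_agg D w U P\<bar> < \<epsilon> / 2}"
    by (auto simp: bad_def not_le)
  finally show ?thesis .
qed

lemma prob_argmax_estimate_near_optimal:
  assumes "finite D" "finite UU" "card UU \<le> K" "P \<subseteq> D" "0 \<le> r"
    and "valid_weights D w" "bounded_range D r UU"
    and "0 < \<epsilon>" "0 < \<delta>" "\<delta> \<le> 1"
    and "8 * ((r + 1) * (real (card D) + 1))\<^sup>2 * (1 + ln (2 * real K + 2)) * (1 + ln (1 / \<delta>)) / \<epsilon>\<^sup>2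
           \<le> real m"
  shows "1 - \<delta> \<le> measure_pmf.prob (strat_sample_pmf D UU m)
           {\<sigma>. \<forall>U\<in>UU. (\<forall>V\<in>UU. est_F_agg D w m \<sigma> V P \<le> est_F_agg D w m \<sigma> U P) \<longrightarrow>
                  \<bar>F_agg D w U P - Max ((\<lambda>V. F_agg D w V P) ` UU)\<bar> < \<epsilon>}"
proof -
  have "{\<sigma>. \<forall>U\<in>UU. \<bar>est_F_agg D w m \<sigma> U P - F_agg D w U P\<bar> < \<epsilon> / 2}
      \<subseteq> {\<sigma>. \<forall>U\<in>UU. (\<forall>V\<in>UU. est_F_agg D w m \<sigma> V P \<le> est_F_agg D w m \<sigma> U P) \<longrightarrow>
                  \<bar>F_agg D w U P - Max ((\<lambda>V. F_agg D w V P) ` UU)\<bar> < \<epsilon>}"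
  proof (intro subsetI CollectI ballI impI)
    fix \<sigma> U
    assume "\<sigma> \<in> {\<sigma>. \<forall>U\<in>UU. \<bar>est_F_agg D w m \<sigma> U P - F_agg D w U P\<bar> < \<epsilon> / 2}" "U \<in> UU"
      and "\<forall>V\<in>UU. est_F_agg D w m \<sigma> V P \<le> est_F_agg D w m \<sigma> U P"
    then show "\<bar>F_agg D w U P - Max ((\<lambda>V. F_agg D w V P) ` UU)\<bar> < \<epsilon>"
      by (intro argmax_of_approximation_near_Max[OF assms(2), where g = "\<lambda>V. est_F_agg D w m \<sigma> V P"]) auto
  qed
  then show ?thesis
    by (rule order_trans[OF prob_all_estimates_accurate[OF assms] measure_pmf.finite_measure_mono]) simp
qed

lemma num_evals_le:
  assumes "finite D" "card UU \<le> K" "real m \<le> y"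
  shows "real (num_evals D UU m) \<le> 2 * real K * real (card D) ^ 2 * y"
proof -
  have "num_evals D UU m = 2 * card UU * card D ^ 2 * m"
    unfolding num_evals_def sample_index_def using assms(1)
    by (simp add: card_cartesian_product power2_eq_square)
  then show ?thesis
    using assms(2,3) by (simp add: mult_mono)
qed

theorem proposition1:
  fixes K :: nat and r :: real
  assumes "0 \<le> r"
  shows "\<exists>(C::real) (a::nat). C > 0 \<and>
    (\<forall>(D::'a set) w (UU::('a set \<Rightarrow> real) set) P (\<epsilon>::real) (\<delta>::real).
      finite D \<longrightarrow> valid_weights D w \<longrightarrow>
      finite UU \<longrightarrow> UU \<noteq> {} \<longrightarrow> card UU \<le> K \<longrightarrow> bounded_range D r UU \<longrightarrow>
      P \<subseteq> D \<longrightarrow> 0 < \<epsilon> \<longrightarrow> 0 < \<delta> \<longrightarrow> \<delta> < 1 \<longrightarrow>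
      (let m = nat \<lceil>C * real (card D + 1) ^ a * (1 + ln (1 / \<delta>)) / \<epsilon>\<^sup>2\<rceil>
       in real (num_evals D UU m)
            \<le> 2 * real K * real (card D) ^ 2 * (C * real (card D + 1) ^ a * (1 + ln (1 / \<delta>)) / \<epsilon>\<^sup>2 + 1)
          \<and> measure_pmf.prob (strat_sample_pmf D UU m)
              {\<sigma>. \<forall>U\<in>UU. (\<forall>V\<in>UU. est_F_agg D w m \<sigma> V P \<le> est_F_agg D w m \<sigma> U P) \<longrightarrow>
                     \<bar>F_agg D w U P - Max ((\<lambda>V. F_agg D w V P) ` UU)\<bar> < \<epsilon>}
            \<ge> 1 - \<delta>))"
proof -
  define C where "C = 8 * (r + 1)\<^sup>2 * (1 + ln (2 * real K + 2))"
  have "C > 0"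
    using assms unfolding C_def by (simp add: add_pos_nonneg)
  show ?thesis
  proof (intro exI[of _ C] exI[of _ "2::nat"] conjI allI impI, goal_cases)
    case 1
    show ?case
      by fact
  next
    case (2 D w UU P \<epsilon> \<delta>)
    note hyps = this
    define x where "x = C * real (card D + 1) ^ 2 * (1 + ln (1 / \<delta>)) / \<epsilon>\<^sup>2"
    have x_eq: "x = 8 * ((r + 1) * (real (card D) + 1))\<^sup>2 * (1 + ln (2 * real K + 2)) * (1 + ln (1 / \<delta>)) / \<epsilon>\<^sup>2"
      unfolding x_def C_def by (simp add: power_mult_distrib)
    have "0 \<le> x"
      using \<open>C > 0\<close> hyps(9,10) unfolding x_def by (simp add: add_nonneg_nonneg)
    then have m: "x \<le> real (nat \<lceil>x\<rceil>)" "real (nat \<lceil>x\<rceil>) \<le> x + 1"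
      by linarith+
    have "1 - \<delta> \<le> measure_pmf.prob (strat_sample_pmf D UU (nat \<lceil>x\<rceil>))
        {\<sigma>. \<forall>U\<in>UU. (\<forall>V\<in>UU. est_F_agg D w (nat \<lceil>x\<rceil>) \<sigma> V P \<le> est_F_agg D w (nat \<lceil>x\<rceil>) \<sigma> U P) \<longrightarrow>
               \<bar>F_agg D w U P - Max ((\<lambda>V. F_agg D w V P) ` UU)\<bar> < \<epsilon>}"
      using hyps assms m(1) unfolding x_eq by (intro prob_argmax_estimate_near_optimal) auto
    with num_evals_le[OF hyps(1,5) m(2)] show ?case
      unfolding Let_def x_def[symmetric] by (rule conjI)
  qed
qed

end
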